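(* Let $\mathcal{X}$ be a non-degenerate fuzzy random variable with values in $\mathcal{F}_c(\mathbb{R})$ such that the real random variable $s_{\mathcal{X}}(u,\alpha)$ has a unique median for each $u\in\{-1,1\}$ and $\alpha\in[0,1]$. Then $\mathrm{Med}_s(\mathcal{X})=\mathrm{Med}(\mathcal{X};D_{FP})=\{\mathrm{med}_{Si}(\mathcal{X})\}=\{\mathrm{med}_{Gr}(\mathcal{X})\}$.
   Context: $\mathcal{F}_c(\mathbb{R})$ is the set of functions $A:\mathbb{R}\to[0,1]$ whose $\alpha$-levels $A_\alpha=\{x:A(x)\ge\alpha\}$ ($\alpha\in(0,1]$) and $A_0=\overline{\{x:A(x)>0\}}$ are non-empty compact intervals. Support function: $s_A(u,\alpha)=\sup\{uv:v\in A_\alpha\}$, $u\in\{-1,1\}$, $\alpha\in[0,1]$. A fuzzy random variable on $(\Omega,\mathcal{A},\mathbb{P})$ is a map $\mathcal{X}:\Omega\to\mathcal{F}_c(\mathbb{R})$ with each $\omega\mapsto\mathcal{X}(\omega)_\alpha$ a random compact set; $s_{\mathcal{X}}(u,\alpha)(\omega)=s_{\mathcal{X}(\omega)}(u,\alpha)$. Non-degenerate means not almost surely equal to a constant element of $\mathcal{F}_c(\mathbb{R})$. For a real random variable $X$, $\mathrm{Med}(X)=[\underline{\mathrm{med}}(X),\overline{\mathrm{med}}(X)]$ is its set of medians, $\mathrm{med}(X)$ its midpoint, $\mathrm{MAD}(X)=\mathrm{med}(|X-\mathrm{med}(X)|)$. $\mathrm{med}_{Si}(\mathcal{X})$ is the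 element of $\mathcal{F}_c(\mathbb{R})$ with $s_{\mathrm{med}_{Si}(\mathcal{X})}(u,\alpha)=\mathrm{med}(s_{\mathcal{X}}(u,\alpha))$ for all $u,\alpha$. $\mathrm{med}_{Gr}(\mathcal{X})$ (Grzegorzewski median) is the fuzzy number with membership $\mathrm{med}_{Gr}(\mathcal{X})(t)=\sup\{\inf_{\omega}\mathcal{X}(\omega)(X(\omega)): X:\Omega\to\mathbb{R}\text{ Borel measurable},\ t\in\mathrm{Med}(X)\}$; equivalently $(\mathrm{med}_{Gr}(\mathcal{X}))_\alpha=[\underline{\mathrm{med}}(\inf\mathcal{X}_\alpha),\overline{\mathrm{med}}(\sup\mathcal{X}_\alpha)]$ for all $\alpha$. $\mathrm{Med}_s(\mathcal{X})$ is the set of $A\in\mathcal{F}_c(\mathbb{R})$ with $s_A(u,\alpha)\in\mathrm{Med}(s_{\mathcal{X}}(u,\alpha))$ for all $u,\alpha$. $D_{FP}(A;\mathcal{X})=(1+O(A;\mathcal{X}))^{-1}$ with $O(A;\mathcal{X})=\sup_{(u,\alpha)}\frac{|s_A(u,\alpha)-\mathrm{med}(s_{\mathcal{X}}(u,\alpha))|}{\mathrm{MAD}(s_{\mathcal{X}}(u,\alpha))}$, and $\mathrm{Med}(\mathcal{X};D_{FP})$ is the set of maximizers of $D_{FP}(\cdot;\mathcal{X})$ over $\mathcal{F}_c(\mathbb{R})$. *)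

theory Defs
  imports "HOL-Probability.Probability"
begin

definition level :: "(real \<Rightarrow> real) \<Rightarrow> real \<Rightarrow> real set" where
  "level A \<alpha> = (if \<alpha> = 0 then closure {x. A x > 0} else {x. A x \<ge> \<alpha>})"

definition is_cinterval :: "real set \<Rightarrow> bool" where
  "is_cinterval S \<longleftrightarrow> (\<exists>a b. a \<le> b \<and> S = {a..b})"

definition Fc :: "(real \<Rightarrow> real) set" where
  "Fc = {A. (\<forall>x. 0 \<le> A x \<and> A x \<le> 1) \<and> (\<forall>\<alpha>\<in>{0..1}. is_cinterval (level A \<alpha>))}"

text \<open>Support function, u ranging over {-1,1}.\<close>
definition supp_fun :: "(real \<Rightarrow> real) \<Rightarrow> real \<Rightarrow> real \<Rightarrow> real" where
  "supp_fun A u \<alpha> = Sup ((\<lambda>v. u * v) ` level A \<alpha>)"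

definition random_compact_set :: "'w measure \<Rightarrow> ('w \<Rightarrow> real set) \<Rightarrow> bool" where
  "random_compact_set M F \<longleftrightarrow> (\<forall>\<omega>\<in>space M. compact (F \<omega>) \<and> F \<omega> \<noteq> {}) \<and>
     (\<forall>K. compact K \<longrightarrow> {\<omega>\<in>space M. F \<omega> \<inter> K \<noteq> {}} \<in> sets M)"

definition fuzzy_random_variable :: "'w measure \<Rightarrow> ('w \<Rightarrow> real \<Rightarrow> real) \<Rightarrow> bool" where
  "fuzzy_random_variable M X \<longleftrightarrow> (\<forall>\<omega>\<in>space M. X \<omega> \<in> Fc) \<and>
     (\<forall>\<alpha>\<in>{0..1}. random_compact_set M (\<lambda>\<omega>. level (X \<omega>) \<alpha>))"

definition non_degenerate :: "'w measure \<Rightarrow> ('w \<Rightarrow> real \<Rightarrow> real) \<Rightarrow> bool" where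
  "non_degenerate M X \<longleftrightarrow> \<not> (\<exists>A\<in>Fc. AE \<omega> in M. X \<omega> = A)"

definition sX :: "('w \<Rightarrow> real \<Rightarrow> real) \<Rightarrow> real \<Rightarrow> real \<Rightarrow> 'w \<Rightarrow> real" where
  "sX X u \<alpha> = (\<lambda>\<omega>. supp_fun (X \<omega>) u \<alpha>)"

definition Med :: "'w measure \<Rightarrow> ('w \<Rightarrow> real) \<Rightarrow> real set" where
  "Med M Y = {m. measure M {\<omega>\<in>space M. Y \<omega> \<le> m} \<ge> 1/2 \<and> measure M {\<omega>\<in>space M. Y \<omega> \<ge> m} \<ge> 1/2}"

definition med :: "'w measure \<Rightarrow> ('w \<Rightarrow> real) \<Rightarrow> real" where
  "med M Y = (Inf (Med M Y) + Sup (Med M Y)) / 2"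

definition MAD :: "'w measure \<Rightarrow> ('w \<Rightarrow> real) \<Rightarrow> real" where
  "MAD M Y = med M (\<lambda>\<omega>. \<bar>Y \<omega> - med M Y\<bar>)"

definition med_Si :: "'w measure \<Rightarrow> ('w \<Rightarrow> real \<Rightarrow> real) \<Rightarrow> real \<Rightarrow> real" where
  "med_Si M X = (THE A. A \<in> Fc \<and>
     (\<forall>u\<in>{-1,1}. \<forall>\<alpha>\<in>{0..1}. supp_fun A u \<alpha> = med M (sX X u \<alpha>)))"

definition med_Gr :: "'w measure \<Rightarrow> ('w \<Rightarrow> real \<Rightarrow> real) \<Rightarrow> real \<Rightarrow> real" where
  "med_Gr M X t = Sup {Inf ((\<lambda>\<omega>. X \<omega> (Y \<omega>)) ` space M) | Y.
                        Y \<in> borel_measurable M \<and> t \<in> Med M Y}"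

definition Med_s :: "'w measure \<Rightarrow> ('w \<Rightarrow> real \<Rightarrow> real) \<Rightarrow> (real \<Rightarrow> real) set" where
  "Med_s M X = {A \<in> Fc. \<forall>u\<in>{-1,1}. \<forall>\<alpha>\<in>{0..1}. supp_fun A u \<alpha> \<in> Med M (sX X u \<alpha>)}"

text \<open>Outlyingness: the quotient |d|/MAD is read in the extended reals,
  with d/0 = \<infinity> for d \<noteq> 0 and 0/0 = 0.\<close>
definition ratio_ereal :: "real \<Rightarrow> real \<Rightarrow> ereal" where
  "ratio_ereal d m = (if m = 0 then (if d = 0 then 0 else \<infinity>) else ereal (d / m))"

definition Outl :: "'w measure \<Rightarrow> (real \<Rightarrow> real) \<Rightarrow> ('w \<Rightarrow> real \<Rightarrow> real) \<Rightarrow> ereal" where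
  "Outl M A X = (SUP p\<in>{-1,1::real} \<times> {0..1::real}.
      ratio_ereal \<bar>supp_fun A (fst p) (snd p) - med M (sX X (fst p) (snd p))\<bar>
                  (MAD M (sX X (fst p) (snd p))))"

definition D_FP :: "'w measure \<Rightarrow> (real \<Rightarrow> real) \<Rightarrow> ('w \<Rightarrow> real \<Rightarrow> real) \<Rightarrow> ereal" where
  "D_FP M A X = 1 / (1 + Outl M A X)"

definition Med_DFP :: "'w measure \<Rightarrow> ('w \<Rightarrow> real \<Rightarrow> real) \<Rightarrow> (real \<Rightarrow> real) set" where
  "Med_DFP M X = {A \<in> Fc. \<forall>B\<in>Fc. D_FP M B X \<le> D_FP M A X}"

end

theory Submission
  imports Defs
begin

(* Write m(u,a) for the unique median of s_X(u,a). Medians are monotone, so m(u,.) is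
   nonincreasing like every support function. The two limit properties that characterise support
   functions of fuzzy numbers, left continuity on (0,1] and right continuity at 0, carry over as
   well: along a monotone sequence of levels the events {t <= s_X(u,b)} decrease to
   {t <= s_X(u,a)} (by compactness of the levels), so a probability bound 1/2 survives the limit,
   and uniqueness of the median turns it into a bound on m(u,a). Hence the intervals
   [-m(-1,a), m(1,a)] are the levels of a fuzzy number, which is med_Si. Support functions
   determine fuzzy numbers, so it is the only element of Med_s and the only fuzzy number of
   outlyingness 0, i.e. the only maximiser of D_FP. Finally, t lies in the a-level of med_Si
   exactly when some measurable selection of the a-levels of X has median t (clamp t into the
   levels), and this is the defining property of med_Gr. *)

section \<open>Medians of real random variables\<close>

lemma med_Med_singleton: "Med M Y = {m} \<Longrightarrow> med M Y = m"
  unfolding med_def by simp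

lemma (in real_distribution) ex_median_cdf: "\<exists>m. 1/2 \<le> cdf M m \<and> measure M {..<m} \<le> 1/2"
proof -
  define S where "S = {x. 1/2 \<le> cdf M x}"
  define m where "m = Inf S"
  have "\<forall>\<^sub>F x in at_top. 1/2 < cdf M x"
    using cdf_lim_at_top_prob by (rule order_tendstoD) simp
  then obtain x0 where "x0 \<in> S" by (auto simp: S_def eventually_at_top_linorder intro: less_imp_le)
  have "\<forall>\<^sub>F x in at_bot. cdf M x < 1/2"
    using cdf_lim_at_bot by (rule order_tendstoD) simp
  then obtain B where B: "\<And>x. x \<le> B \<Longrightarrow> cdf M x < 1/2" by (auto simp: eventually_at_bot_linorder)
  have bdd: "bdd_below S"
  proof (rule bdd_belowI)
    fix x assume "x \<in> S"
    then show "B \<le> x" using B[of x] by (cases "x \<le> B") (auto simp: S_def)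
  qed
  have "1/2 \<le> cdf M m"
  proof (rule tendsto_lowerbound)
    show "(cdf M \<longlongrightarrow> cdf M m) (at_right m)"
      using cdf_is_right_cont[of m] unfolding continuous_within .
    show "\<forall>\<^sub>F x in at_right m. 1/2 \<le> cdf M x"
    proof (rule eventually_at_rightI[where b = "m + 1"])
      fix x assume "x \<in> {m<..<m + 1}"
      then obtain s where "s \<in> S" "s < x" using cInf_less_iff[OF _ bdd] \<open>x0 \<in> S\<close> m_def by auto
      then show "1/2 \<le> cdf M x" unfolding S_def using cdf_nondecreasing[of s x] by simp
    qed simp
  qed simp
  moreover have "measure M {..<m} \<le> 1/2"
  proof (rule tendsto_upperbound)
    show "\<forall>\<^sub>F x in at_left m. cdf M x \<le> 1/2"
    proof (rule eventually_at_leftI[where a = "m - 1"])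
      fix x assume "x \<in> {m - 1<..<m}"
      then have "x \<notin> S" using cInf_lower[OF _ bdd] m_def by force
      then show "cdf M x \<le> 1/2" by (simp add: S_def)
    qed simp
  qed (simp_all add: cdf_at_left)
  ultimately show ?thesis by blast
qed

context prob_space
begin

lemma prob_Inter_decseq_ge:
  assumes "range S \<subseteq> events" "decseq S" "\<And>n. c \<le> prob (S n)"
  shows "c \<le> prob (\<Inter>n. S n)"
  using finite_Lim_measure_decseq[OF assms(1,2)] by (rule LIMSEQ_le_const) (use assms(3) in auto)

lemma Med_singleton_le:
  fixes Y :: "'a \<Rightarrow> real"
  assumes Y: "Y \<in> borel_measurable M" and med: "Med M Y = {c}"
    and half: "1/2 \<le> prob {w\<in>space M. Y w \<le> t}"
  shows "c \<le> t"
proof (rule ccontr)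
  assume "\<not> c \<le> t"
  have "1/2 \<le> prob {w\<in>space M. c \<le> Y w}" using med by (auto simp: Med_def)
  also have "\<dots> \<le> prob {w\<in>space M. t \<le> Y w}"
    using \<open>\<not> c \<le> t\<close> by (intro finite_measure_mono) (auto, use Y in measurable)
  finally have "t \<in> Med M Y" using half by (simp add: Med_def)
  with med \<open>\<not> c \<le> t\<close> show False by auto
qed

lemma Med_singleton_ge:
  fixes Y :: "'a \<Rightarrow> real"
  assumes Y: "Y \<in> borel_measurable M" and med: "Med M Y = {c}"
    and half: "1/2 \<le> prob {w\<in>space M. t \<le> Y w}"
  shows "t \<le> c"
proof (rule ccontr)
  assume "\<not> t \<le> c"
  have "1/2 \<le> prob {w\<in>space M. Y w \<le> c}" using med by (auto simp: Med_def)
  also have "\<dots> \<le> prob {w\<in>space M. Y w \<le> t}"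
    using \<open>\<not> t \<le> c\<close> by (intro finite_measure_mono) (auto, use Y in measurable)
  finally have "t \<in> Med M Y" using half by (simp add: Med_def)
  with med \<open>\<not> t \<le> c\<close> show False by auto
qed

lemma Med_singleton_mono:
  fixes Y Z :: "'a \<Rightarrow> real"
  assumes Y: "Y \<in> borel_measurable M" and "Med M Y = {c}" and "d \<in> Med M Z"
    and le: "\<And>w. w \<in> space M \<Longrightarrow> Y w \<le> Z w"
  shows "c \<le> d"
proof (rule Med_singleton_le[OF Y \<open>Med M Y = {c}\<close>])
  have "1/2 \<le> prob {w\<in>space M. Z w \<le> d}" using \<open>d \<in> Med M Z\<close> by (simp add: Med_def)
  also have "\<dots> \<le> prob {w\<in>space M. Y w \<le> d}"
    using le by (intro finite_measure_mono) (auto intro: order_trans, use Y in measurable)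
  finally show "1/2 \<le> prob {w\<in>space M. Y w \<le> d}" .
qed

lemma prob_le_eq_cdf_distr:
  fixes Y :: "'a \<Rightarrow> real"
  assumes "Y \<in> borel_measurable M"
  shows "prob {w\<in>space M. Y w \<le> x} = cdf (distr M borel Y) x"
  using assms by (simp add: cdf_def measure_distr vimage_def Int_def conj_commute)

lemma Med_nonempty:
  fixes Y :: "'a \<Rightarrow> real"
  assumes Y: "Y \<in> borel_measurable M"
  shows "Med M Y \<noteq> {}"
proof -
  interpret Y: real_distribution "distr M borel Y" using Y by simp
  obtain m where "1/2 \<le> cdf (distr M borel Y) m" "measure (distr M borel Y) {..<m} \<le> 1/2"
    using Y.ex_median_cdf by blast
  moreover have "measure (distr M borel Y) {..<m} = prob {w\<in>space M. Y w < m}"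
    using Y by (simp add: measure_distr vimage_def Int_def conj_commute)
  moreover have "prob {w\<in>space M. m \<le> Y w} = prob (space M - {w\<in>space M. Y w < m})"
    by (rule arg_cong[where f = prob]) auto
  moreover have "\<dots> = 1 - prob {w\<in>space M. Y w < m}"
    by (rule prob_compl) (use Y in measurable)
  ultimately have "m \<in> Med M Y" using Y by (simp add: Med_def prob_le_eq_cdf_distr)
  then show ?thesis by auto
qed

lemma Med_bdd_above:
  fixes Y :: "'a \<Rightarrow> real"
  assumes Y: "Y \<in> borel_measurable M"
  shows "bdd_above (Med M Y)"
proof -
  interpret Y: real_distribution "distr M borel Y" using Y by simp
  have "\<forall>\<^sub>F x in at_top. 1/2 < cdf (distr M borel Y) x"
    using Y.cdf_lim_at_top_prob by (rule order_tendstoD) simp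
  then obtain B where B: "1/2 < prob {w\<in>space M. Y w \<le> B}"
    by (auto simp: eventually_at_top_linorder prob_le_eq_cdf_distr[OF Y])
  show ?thesis
  proof (rule bdd_aboveI)
    fix x assume x: "x \<in> Med M Y"
    show "x \<le> B"
    proof (rule ccontr)
      assume "\<not> x \<le> B"
      moreover have B_event: "{w\<in>space M. Y w \<le> B} \<in> events" using Y by measurable
      ultimately have "prob {w\<in>space M. x \<le> Y w} \<le> prob (space M - {w\<in>space M. Y w \<le> B})"
        by (intro finite_measure_mono) auto
      also have "\<dots> = 1 - prob {w\<in>space M. Y w \<le> B}" using B_event by (rule prob_compl)
      finally show False using x B by (simp add: Med_def)
    qed
  qed
qed

lemma med_nonneg:
  fixes Y :: "'a \<Rightarrow> real"
  assumes Y: "Y \<in> borel_measurable M" and nonneg: "\<And>w. w \<in> space M \<Longrightarrow> 0 \<le> Y w"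
  shows "0 \<le> med M Y"
proof -
  have Med_nonneg: "0 \<le> x" if "x \<in> Med M Y" for x
  proof (rule ccontr)
    assume "\<not> 0 \<le> x"
    have "1/2 \<le> prob {w\<in>space M. Y w \<le> x}" using that by (simp add: Med_def)
    also have "\<dots> = prob {}"
      using nonneg \<open>\<not> 0 \<le> x\<close> by (intro arg_cong[where f = prob]) force
    finally show False by simp
  qed
  obtain x where "x \<in> Med M Y" using Med_nonempty[OF Y] by auto
  have "0 \<le> Inf (Med M Y)" using Med_nonempty[OF Y] Med_nonneg by (intro cInf_greatest) auto
  moreover have "x \<le> Sup (Med M Y)" using \<open>x \<in> Med M Y\<close> Med_bdd_above[OF Y] by (rule cSup_upper)
  ultimately show ?thesis using Med_nonneg[OF \<open>x \<in> Med M Y\<close>] by (simp add: med_def)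
qed

lemma MAD_nonneg:
  fixes Y :: "'a \<Rightarrow> real"
  assumes "Y \<in> borel_measurable M"
  shows "0 \<le> MAD M Y"
  unfolding MAD_def by (rule med_nonneg) (use assms in auto)

end

section \<open>Levels and support functions of fuzzy numbers\<close>

lemma level_antimono:
  assumes "0 \<le> \<alpha>" "\<alpha> \<le> \<beta>"
  shows "level A \<beta> \<subseteq> level A \<alpha>"
proof (cases "\<alpha> = 0")
  case True
  have "{x. \<beta> \<le> A x} \<subseteq> closure {x. 0 < A x}" if "\<beta> \<noteq> 0"
    using that assms closure_subset by fastforce
  then show ?thesis using True by (auto simp: level_def)
qed (use assms in \<open>auto simp: level_def\<close>)

lemma Fc_level_atLeastAtMost:
  assumes "A \<in> Fc" "\<alpha> \<in> {0..1}"
  obtains l h where "l \<le> h" "level A \<alpha> = {l..h}"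
  using assms unfolding Fc_def is_cinterval_def by blast

lemma supp_fun_atLeastAtMost:
  assumes "l \<le> h" "level A \<alpha> = {l..h}"
  shows "supp_fun A (-1) \<alpha> = - l" "supp_fun A 1 \<alpha> = h"
proof -
  show "supp_fun A (-1) \<alpha> = - l"
    unfolding supp_fun_def assms(2) by (rule cSup_eq_maximum) (use assms(1) in auto)
  show "supp_fun A 1 \<alpha> = h"
    unfolding supp_fun_def assms(2) using assms(1) by simp
qed

lemma supp_fun_ge_iff:
  assumes "A \<in> Fc" "\<alpha> \<in> {0..1}"
  shows "t \<le> supp_fun A u \<alpha> \<longleftrightarrow> (\<exists>v\<in>level A \<alpha>. t \<le> u * v)"
proof -
  obtain l h where "l \<le> h" "level A \<alpha> = {l..h}" using Fc_level_atLeastAtMost[OF assms] .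
  then have "compact ((\<lambda>v. u * v) ` level A \<alpha>)" "(\<lambda>v. u * v) ` level A \<alpha> \<noteq> {}"
    by (auto intro!: compact_continuous_image continuous_intros)
  then have "supp_fun A u \<alpha> \<in> (\<lambda>v. u * v) ` level A \<alpha>"
    "\<And>v. v \<in> level A \<alpha> \<Longrightarrow> u * v \<le> supp_fun A u \<alpha>"
    unfolding supp_fun_def
    by (auto intro!: closed_contains_Sup cSup_upper bounded_imp_bdd_above
        simp: compact_imp_closed compact_imp_bounded)
  then show ?thesis by (auto intro: order_trans)
qed

lemma supp_fun_le_iff:
  assumes "A \<in> Fc" "\<alpha> \<in> {0..1}"
  shows "supp_fun A u \<alpha> \<le> t \<longleftrightarrow> (\<forall>v\<in>level A \<alpha>. u * v \<le> t)"
proof -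
  obtain l h where "l \<le> h" "level A \<alpha> = {l..h}" using Fc_level_atLeastAtMost[OF assms] .
  then have "bdd_above ((\<lambda>v. u * v) ` level A \<alpha>)" "(\<lambda>v. u * v) ` level A \<alpha> \<noteq> {}"
    by (auto intro!: bounded_imp_bdd_above compact_imp_bounded compact_continuous_image
        continuous_intros)
  then show ?thesis unfolding supp_fun_def by (simp add: cSup_le_iff)
qed

lemma supp_fun_antimono:
  assumes "A \<in> Fc" "0 \<le> \<alpha>" "\<alpha> \<le> \<beta>" "\<beta> \<le> 1"
  shows "supp_fun A u \<beta> \<le> supp_fun A u \<alpha>"
proof -
  have "\<beta> \<in> {0..1}" using assms by auto
  then obtain v where "v \<in> level A \<beta>" "supp_fun A u \<beta> \<le> u * v"
    using supp_fun_ge_iff[OF assms(1), of \<beta> "supp_fun A u \<beta>" u] by auto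
  moreover have "\<alpha> \<in> {0..1}" using assms by auto
  ultimately show ?thesis
    using supp_fun_ge_iff[OF assms(1)] level_antimono[OF assms(2,3)] by blast
qed

lemma Fc_eqI_level:
  assumes "A \<in> Fc" "B \<in> Fc" and level_eq: "\<And>\<alpha>. \<alpha> \<in> {0..1} \<Longrightarrow> level A \<alpha> = level B \<alpha>"
  shows "A = B"
proof -
  have le: "C x \<le> D x"
    if "C \<in> Fc" "D \<in> Fc" "\<And>\<alpha>. \<alpha> \<in> {0..1} \<Longrightarrow> level C \<alpha> = level D \<alpha>" for C D x
  proof (cases "C x = 0")
    case True
    then show ?thesis using \<open>D \<in> Fc\<close> by (simp add: Fc_def)
  next
    case False
    then have "C x \<in> {0..1}" using \<open>C \<in> Fc\<close> by (simp add: Fc_def)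
    moreover have "x \<in> level C (C x)" using False by (simp add: level_def)
    ultimately have "x \<in> level D (C x)" using that(3) by blast
    then show ?thesis using False by (simp add: level_def)
  qed
  show ?thesis using le[OF assms(1,2)] le[OF assms(2,1)] level_eq by (auto intro: order.antisym)
qed

lemma Fc_eqI_supp_fun:
  assumes A: "A \<in> Fc" and B: "B \<in> Fc"
    and supp_eq: "\<And>u \<alpha>. u \<in> {-1,1} \<Longrightarrow> \<alpha> \<in> {0..1} \<Longrightarrow> supp_fun A u \<alpha> = supp_fun B u \<alpha>"
  shows "A = B"
proof (rule Fc_eqI_level[OF A B])
  fix \<alpha> :: real assume \<alpha>: "\<alpha> \<in> {0..1}"
  obtain l h where "l \<le> h" "level A \<alpha> = {l..h}" using Fc_level_atLeastAtMost[OF A \<alpha>] .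
  moreover obtain l' h' where "l' \<le> h'" "level B \<alpha> = {l'..h'}" using Fc_level_atLeastAtMost[OF B \<alpha>] .
  ultimately show "level A \<alpha> = level B \<alpha>"
    using supp_fun_atLeastAtMost supp_eq[of "-1" \<alpha>] supp_eq[of 1 \<alpha>] \<alpha> by force
qed

lemma incseq_tendsto_from_below:
  fixes \<alpha> :: real
  assumes "0 < \<alpha>"
  obtains \<beta> :: "nat \<Rightarrow> real" where "incseq \<beta>" "\<And>n. \<beta> n \<in> {0<..<\<alpha>}" "\<beta> \<longlonglongrightarrow> \<alpha>"
proof
  define \<beta> where "\<beta> n = \<alpha> * (1 - inverse (real n + 2))" for n :: nat
  show "incseq \<beta>"
    unfolding \<beta>_def incseq_def using assms by (auto intro!: mult_left_mono le_imp_inverse_le)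
  show "\<beta> n \<in> {0<..<\<alpha>}" for n
  proof -
    have "0 < inverse (real n + 2)" "inverse (real n + 2) < 1" by (simp_all add: inverse_less_1_iff)
    then show ?thesis
      unfolding \<beta>_def using assms by (auto simp: algebra_simps mult_less_cancel_left1)
  qed
  have "(\<lambda>n. inverse (real n + 2)) \<longlonglongrightarrow> 0"
    using LIMSEQ_Suc[OF LIMSEQ_inverse_real_of_nat] by (simp add: add.commute)
  then have "\<beta> \<longlonglongrightarrow> \<alpha> * (1 - 0)"
    unfolding \<beta>_def by (intro tendsto_mult tendsto_diff tendsto_const)
  then show "\<beta> \<longlonglongrightarrow> \<alpha>" by simp
qed

lemma level_Int_nonempty_left_limit:
  assumes A: "A \<in> Fc" and "\<alpha> \<le> 1" "incseq \<beta>" "\<And>n. \<beta> n \<in> {0<..<\<alpha>}" "\<beta> \<longlonglongrightarrow> \<alpha>"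
    and "closed C" and nonempty: "\<And>n. level A (\<beta> n) \<inter> C \<noteq> {}"
  shows "level A \<alpha> \<inter> C \<noteq> {}"
proof -
  have \<beta>_unit: "\<beta> n \<in> {0..1}" for n using assms(2) assms(4)[of n] by auto
  have "\<Inter>(range (\<lambda>n. level A (\<beta> n) \<inter> C)) \<noteq> {}"
  proof (rule compact_nest)
    show "compact (level A (\<beta> n) \<inter> C)" for n
      using Fc_level_atLeastAtMost[OF A \<beta>_unit] \<open>closed C\<close> by (metis compact_Icc compact_Int_closed)
    show "level A (\<beta> n) \<inter> C \<noteq> {}" for n by (rule nonempty)
    show "level A (\<beta> n) \<inter> C \<subseteq> level A (\<beta> m) \<inter> C" if "m \<le> n" for m n
      using level_antimono[of "\<beta> m" "\<beta> n" A] \<open>incseq \<beta>\<close> that assms(4)[of m]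
      by (auto simp: incseq_def)
  qed
  then obtain x where x: "x \<in> C" "\<And>n. x \<in> level A (\<beta> n)" by blast
  have "\<beta> n \<le> A x" for n using x(2)[of n] assms(4)[of n] by (simp add: level_def)
  then have "\<alpha> \<le> A x" using \<open>\<beta> \<longlonglongrightarrow> \<alpha>\<close> by (intro LIMSEQ_le_const2) auto
  moreover have "0 < \<alpha>" using assms(4)[of 0] by simp
  ultimately show ?thesis using x(1) by (auto simp: level_def)
qed

lemma supp_fun_left_limit:
  assumes A: "A \<in> Fc" and "\<alpha> \<le> 1" "incseq \<beta>" "\<And>n. \<beta> n \<in> {0<..<\<alpha>}" "\<beta> \<longlonglongrightarrow> \<alpha>"
    and ge: "\<And>n. t \<le> supp_fun A u (\<beta> n)"
  shows "t \<le> supp_fun A u \<alpha>"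
proof -
  have "closed {v. t \<le> u * v}" by (intro closed_Collect_le continuous_intros)
  moreover have "level A (\<beta> n) \<inter> {v. t \<le> u * v} \<noteq> {}" for n
    using ge[of n] supp_fun_ge_iff[OF A, of "\<beta> n"] assms(2) assms(4)[of n] by auto
  ultimately have "level A \<alpha> \<inter> {v. t \<le> u * v} \<noteq> {}"
    by (rule level_Int_nonempty_left_limit[OF assms(1-5)])
  moreover have "0 \<le> \<alpha>" using assms(4)[of 0] by simp
  ultimately show ?thesis using supp_fun_ge_iff[OF A] \<open>\<alpha> \<le> 1\<close> by auto
qed

lemma level_zero_subset:
  assumes "closed C" "\<gamma> \<longlonglongrightarrow> 0" "\<And>n. 0 < \<gamma> n" and sub: "\<And>n. level A (\<gamma> n) \<subseteq> C"
  shows "level A 0 \<subseteq> C"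
proof -
  have "x \<in> C" if "0 < A x" for x
  proof -
    have "\<forall>\<^sub>F n in sequentially. \<gamma> n < A x" using \<open>\<gamma> \<longlonglongrightarrow> 0\<close> that by (rule order_tendstoD)
    then obtain n where "\<gamma> n < A x" by (auto simp: eventually_sequentially)
    then have "x \<in> level A (\<gamma> n)" using assms(3)[of n] by (simp add: level_def)
    then show ?thesis using sub by blast
  qed
  then have "{x. 0 < A x} \<subseteq> C" by blast
  then show ?thesis using \<open>closed C\<close> by (simp add: level_def closure_minimal)
qed

lemma supp_fun_right_limit_zero:
  assumes A: "A \<in> Fc" and "\<gamma> \<longlonglongrightarrow> 0" "\<And>n. \<gamma> n \<in> {0<..1}"
    and le: "\<And>n. supp_fun A u (\<gamma> n) \<le> t"
  shows "supp_fun A u 0 \<le> t"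
proof -
  have "closed {v. u * v \<le> t}" by (intro closed_Collect_le continuous_intros)
  moreover have "level A (\<gamma> n) \<subseteq> {v. u * v \<le> t}" for n
    using le[of n] supp_fun_le_iff[OF A, of "\<gamma> n"] assms(3)[of n] by auto
  ultimately have "level A 0 \<subseteq> {v. u * v \<le> t}"
    using assms(2,3) by (intro level_zero_subset) auto
  then show ?thesis using supp_fun_le_iff[OF A] by auto
qed

section \<open>The median fuzzy number\<close>

lemma ratio_ereal_nonneg: "0 \<le> d \<Longrightarrow> 0 \<le> m \<Longrightarrow> 0 \<le> ratio_ereal d m"
  by (simp add: ratio_ereal_def)

lemma ratio_ereal_le_0_iff: "0 \<le> d \<Longrightarrow> 0 \<le> m \<Longrightarrow> ratio_ereal d m \<le> 0 \<longleftrightarrow> d = 0"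
  by (auto simp: ratio_ereal_def divide_le_0_iff)

lemma ereal_inverse_one_plus_le_1: "0 \<le> x \<Longrightarrow> 1 / (1 + x) \<le> (1::ereal)"
  by (cases x) (auto simp: one_ereal_def)

lemma one_le_ereal_inverse_one_plus_iff:
  fixes x :: ereal
  assumes "0 \<le> x"
  shows "1 \<le> 1 / (1 + x) \<longleftrightarrow> x = 0"
  using assms by (cases x) (auto simp: one_ereal_def field_simps)

locale fuzzy_rv_unique_Med = prob_space M for M :: "'w measure" +
  fixes X :: "'w \<Rightarrow> real \<Rightarrow> real"
  assumes fuzzy_rv: "fuzzy_random_variable M X"
    and unique_Med: "\<forall>u\<in>{-1,1::real}. \<forall>\<alpha>\<in>{0..1::real}. \<exists>m. Med M (sX X u \<alpha>) = {m}"
begin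

abbreviation med_supp :: "real \<Rightarrow> real \<Rightarrow> real" where
  "med_supp u \<alpha> \<equiv> med M (sX X u \<alpha>)"

lemma X_in_Fc: "w \<in> space M \<Longrightarrow> X w \<in> Fc"
  using fuzzy_rv by (simp add: fuzzy_random_variable_def)

lemma level_X_hits_measurable:
  "\<alpha> \<in> {0..1} \<Longrightarrow> compact K \<Longrightarrow> {w\<in>space M. level (X w) \<alpha> \<inter> K \<noteq> {}} \<in> events"
  using fuzzy_rv by (simp add: fuzzy_random_variable_def random_compact_set_def)

lemma sX_measurable:
  assumes \<alpha>: "\<alpha> \<in> {0..1}"
  shows "sX X u \<alpha> \<in> borel_measurable M"
proof (rule borel_measurable_iff_ge[THEN iffD2], intro allI)
  fix t
  \<comment> \<open>the \<alpha>-level meets the closed half-line \<open>{v. t \<le> u * v}\<close>, cut into compact pieces\<close>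
  define K where "K n = {v. t \<le> u * v} \<inter> {- real n..real n}" for n :: nat
  have "{w\<in>space M. t \<le> sX X u \<alpha> w} = (\<Union>n. {w\<in>space M. level (X w) \<alpha> \<inter> K n \<noteq> {}})"
  proof (intro set_eqI iffI)
    fix w assume "w \<in> {w\<in>space M. t \<le> sX X u \<alpha> w}"
    then obtain v where w: "w \<in> space M" and v: "v \<in> level (X w) \<alpha>" "t \<le> u * v"
      using supp_fun_ge_iff[OF X_in_Fc \<alpha>] by (auto simp: sX_def)
    obtain n where "\<bar>v\<bar> \<le> real n" using real_arch_simple by blast
    then have "v \<in> level (X w) \<alpha> \<inter> K n" using v by (auto simp: K_def)
    then show "w \<in> (\<Union>n. {w\<in>space M. level (X w) \<alpha> \<inter> K n \<noteq> {}})" using w by blast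
  qed (use supp_fun_ge_iff[OF X_in_Fc \<alpha>] in \<open>auto simp: sX_def K_def\<close>)
  also have "\<dots> \<in> events"
  proof -
    have "compact (K n)" for n
      unfolding K_def by (intro closed_Int_compact closed_Collect_le continuous_intros compact_Icc)
    then show ?thesis using level_X_hits_measurable[OF \<alpha>] by (intro sets.countable_UN) auto
  qed
  finally show "{w\<in>space M. t \<le> sX X u \<alpha> w} \<in> events" .
qed

lemma level_X_eq:
  assumes "w \<in> space M" "\<alpha> \<in> {0..1}"
  shows "level (X w) \<alpha> = {- sX X (-1) \<alpha> w .. sX X 1 \<alpha> w}" "- sX X (-1) \<alpha> w \<le> sX X 1 \<alpha> w"
proof -
  obtain l h where "l \<le> h" "level (X w) \<alpha> = {l..h}"
    using Fc_level_atLeastAtMost[OF X_in_Fc[OF assms(1)] assms(2)] .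
  then show "level (X w) \<alpha> = {- sX X (-1) \<alpha> w .. sX X 1 \<alpha> w}" "- sX X (-1) \<alpha> w \<le> sX X 1 \<alpha> w"
    using supp_fun_atLeastAtMost[of l h "X w" \<alpha>] by (simp_all add: sX_def)
qed

lemma sX_antimono:
  "w \<in> space M \<Longrightarrow> 0 \<le> \<alpha> \<Longrightarrow> \<alpha> \<le> \<beta> \<Longrightarrow> \<beta> \<le> 1 \<Longrightarrow> sX X u \<beta> w \<le> sX X u \<alpha> w"
  unfolding sX_def by (rule supp_fun_antimono[OF X_in_Fc])

lemma Med_sX: "u \<in> {-1,1} \<Longrightarrow> \<alpha> \<in> {0..1} \<Longrightarrow> Med M (sX X u \<alpha>) = {med_supp u \<alpha>}"
  using unique_Med med_Med_singleton by blast

lemma med_supp_half: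
  assumes "u \<in> {-1,1}" "\<alpha> \<in> {0..1}"
  shows "1/2 \<le> prob {w\<in>space M. sX X u \<alpha> w \<le> med_supp u \<alpha>}"
    and "1/2 \<le> prob {w\<in>space M. med_supp u \<alpha> \<le> sX X u \<alpha> w}"
  using Med_sX[OF assms] by (auto simp: Med_def)

lemma med_supp_antimono:
  assumes "u \<in> {-1,1}" "0 \<le> \<alpha>" "\<alpha> \<le> \<beta>" "\<beta> \<le> 1"
  shows "med_supp u \<beta> \<le> med_supp u \<alpha>"
proof (rule Med_singleton_mono)
  show "sX X u \<beta> \<in> borel_measurable M" using assms by (intro sX_measurable) auto
  show "Med M (sX X u \<beta>) = {med_supp u \<beta>}" "med_supp u \<alpha> \<in> Med M (sX X u \<alpha>)"
    using Med_sX assms by auto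
  show "sX X u \<beta> w \<le> sX X u \<alpha> w" if "w \<in> space M" for w
    using sX_antimono[OF that assms(2-4)] .
qed

lemma med_supp_left_limit:
  assumes u: "u \<in> {-1,1}" and "0 < \<alpha>" "\<alpha> \<le> 1"
    and ge: "\<And>\<beta>. 0 < \<beta> \<Longrightarrow> \<beta> < \<alpha> \<Longrightarrow> t \<le> med_supp u \<beta>"
  shows "t \<le> med_supp u \<alpha>"
proof -
  obtain \<beta> :: "nat \<Rightarrow> real" where \<beta>: "incseq \<beta>" "\<And>n. \<beta> n \<in> {0<..<\<alpha>}" "\<beta> \<longlonglongrightarrow> \<alpha>"
    using incseq_tendsto_from_below[OF \<open>0 < \<alpha>\<close>] by blast
  have \<alpha>_unit: "\<alpha> \<in> {0..1}" and \<beta>_unit: "\<beta> n \<in> {0..1}" for n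
    using \<beta>(2)[of n] \<open>0 < \<alpha>\<close> \<open>\<alpha> \<le> 1\<close> by auto
  define S where "S n = {w\<in>space M. t \<le> sX X u (\<beta> n) w}" for n
  have "1/2 \<le> prob (\<Inter>n. S n)"
  proof (rule prob_Inter_decseq_ge)
    show "range S \<subseteq> events"
      unfolding S_def using sX_measurable[OF \<beta>_unit] by auto
    have "sX X u (\<beta> n) w \<le> sX X u (\<beta> m) w" if "m \<le> n" "w \<in> space M" for m n w
      using \<beta>_unit[of n] \<beta>(2)[of m] incseqD[OF \<beta>(1) \<open>m \<le> n\<close>] by (intro sX_antimono[OF that(2)]) auto
    then show "decseq S" unfolding S_def decseq_def by (auto intro: order_trans)
    show "1/2 \<le> prob (S n)" for n
    proof -
      have "1/2 \<le> prob {w\<in>space M. med_supp u (\<beta> n) \<le> sX X u (\<beta> n) w}"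
        by (rule med_supp_half[OF u \<beta>_unit])
      also have "\<dots> \<le> prob (S n)"
        using ge[of "\<beta> n"] \<beta>(2)[of n] sX_measurable[OF \<beta>_unit]
        by (intro finite_measure_mono) (auto simp: S_def)
      finally show ?thesis .
    qed
  qed
  also have "\<dots> \<le> prob {w\<in>space M. t \<le> sX X u \<alpha> w}"
  proof (intro finite_measure_mono subsetI)
    fix w assume "w \<in> (\<Inter>n. S n)"
    then have "w \<in> space M" "\<And>n. t \<le> supp_fun (X w) u (\<beta> n)" by (auto simp: S_def sX_def)
    then show "w \<in> {w\<in>space M. t \<le> sX X u \<alpha> w}"
      using supp_fun_left_limit[OF X_in_Fc \<open>\<alpha> \<le> 1\<close> \<beta>] by (simp add: sX_def)
  qed (use sX_measurable[OF \<alpha>_unit] in measurable)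
  finally show ?thesis by (rule Med_singleton_ge[OF sX_measurable[OF \<alpha>_unit] Med_sX[OF u \<alpha>_unit]])
qed

lemma med_supp_right_limit_zero:
  assumes u: "u \<in> {-1,1}" and le: "\<And>\<alpha>. 0 < \<alpha> \<Longrightarrow> \<alpha> \<le> 1 \<Longrightarrow> med_supp u \<alpha> \<le> t"
  shows "med_supp u 0 \<le> t"
proof -
  define \<gamma> :: "nat \<Rightarrow> real" where "\<gamma> n = inverse (real (Suc n))" for n
  have \<gamma>: "decseq \<gamma>" "\<And>n. \<gamma> n \<in> {0<..1}" "\<gamma> \<longlonglongrightarrow> 0"
    unfolding \<gamma>_def using LIMSEQ_inverse_real_of_nat
    by (auto simp: decseq_def inverse_le_1_iff intro!: le_imp_inverse_le)
  have zero_unit: "(0::real) \<in> {0..1}" and \<gamma>_unit: "\<gamma> n \<in> {0..1}" for n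
    using \<gamma>(2)[of n] by auto
  define S where "S n = {w\<in>space M. sX X u (\<gamma> n) w \<le> t}" for n
  have "1/2 \<le> prob (\<Inter>n. S n)"
  proof (rule prob_Inter_decseq_ge)
    show "range S \<subseteq> events"
      unfolding S_def using sX_measurable[OF \<gamma>_unit] by auto
    have "sX X u (\<gamma> m) w \<le> sX X u (\<gamma> n) w" if "m \<le> n" "w \<in> space M" for m n w
      using \<gamma>_unit[of m] \<gamma>(2)[of n] decseqD[OF \<gamma>(1) \<open>m \<le> n\<close>] by (intro sX_antimono[OF that(2)]) auto
    then show "decseq S" unfolding S_def decseq_def by (auto intro: order_trans)
    show "1/2 \<le> prob (S n)" for n
    proof -
      have "1/2 \<le> prob {w\<in>space M. sX X u (\<gamma> n) w \<le> med_supp u (\<gamma> n)}"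
        by (rule med_supp_half[OF u \<gamma>_unit])
      also have "\<dots> \<le> prob (S n)"
        using le[of "\<gamma> n"] \<gamma>(2)[of n] sX_measurable[OF \<gamma>_unit]
        by (intro finite_measure_mono) (auto simp: S_def)
      finally show ?thesis .
    qed
  qed
  also have "\<dots> \<le> prob {w\<in>space M. sX X u 0 w \<le> t}"
  proof (intro finite_measure_mono subsetI)
    fix w assume "w \<in> (\<Inter>n. S n)"
    then have "w \<in> space M" "\<And>n. supp_fun (X w) u (\<gamma> n) \<le> t" by (auto simp: S_def sX_def)
    then show "w \<in> {w\<in>space M. sX X u 0 w \<le> t}"
      using supp_fun_right_limit_zero[OF X_in_Fc \<gamma>(3,2)] by (simp add: sX_def)
  qed (use sX_measurable[OF zero_unit] in measurable)
  finally show ?thesis by (rule Med_singleton_le[OF sX_measurable[OF zero_unit] Med_sX[OF u zero_unit]])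
qed

lemma med_supp_lower_le_upper:
  assumes \<alpha>: "\<alpha> \<in> {0..1}"
  shows "- med_supp (-1) \<alpha> \<le> med_supp 1 \<alpha>"
proof -
  have Med_lower: "Med M (sX X (-1) \<alpha>) = {med_supp (-1) \<alpha>}" using Med_sX \<alpha> by simp
  have "1/2 \<le> prob {w\<in>space M. sX X 1 \<alpha> w \<le> med_supp 1 \<alpha>}"
    using med_supp_half \<alpha> by simp
  also have "\<dots> \<le> prob {w\<in>space M. - med_supp 1 \<alpha> \<le> sX X (-1) \<alpha> w}"
    using level_X_eq(2)[OF _ \<alpha>] by (intro finite_measure_mono) (force, use sX_measurable[OF \<alpha>] in measurable)
  finally have "- med_supp 1 \<alpha> \<le> med_supp (-1) \<alpha>"
    by (rule Med_singleton_ge[OF sX_measurable[OF \<alpha>] Med_lower])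
  then show ?thesis by linarith
qed

definition med_fuzzy :: "real \<Rightarrow> real" where
  "med_fuzzy x = Sup (insert 0 {\<alpha>\<in>{0<..1}. \<forall>u\<in>{-1,1}. u * x \<le> med_supp u \<alpha>})"

lemma med_fuzzy_grades_bdd: "bdd_above (insert 0 {\<alpha>\<in>{0<..1}. \<forall>u\<in>{-1,1}. u * x \<le> med_supp u \<alpha>})"
  by (rule bdd_aboveI[of _ 1]) auto

lemma med_fuzzy_nonneg: "0 \<le> med_fuzzy x"
  unfolding med_fuzzy_def using med_fuzzy_grades_bdd by (rule cSup_upper[rotated]) simp

lemma med_fuzzy_le_1: "med_fuzzy x \<le> 1"
  unfolding med_fuzzy_def by (rule cSup_least) auto

lemma le_med_fuzzy_iff:
  assumes "0 < \<alpha>" "\<alpha> \<le> 1"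
  shows "\<alpha> \<le> med_fuzzy x \<longleftrightarrow> (\<forall>u\<in>{-1,1}. u * x \<le> med_supp u \<alpha>)"
proof
  assume "\<forall>u\<in>{-1,1}. u * x \<le> med_supp u \<alpha>"
  then show "\<alpha> \<le> med_fuzzy x"
    unfolding med_fuzzy_def using assms med_fuzzy_grades_bdd by (intro cSup_upper) auto
next
  assume \<alpha>: "\<alpha> \<le> med_fuzzy x"
  have "u * x \<le> med_supp u \<beta>" if "u \<in> {-1,1}" "0 < \<beta>" "\<beta> < \<alpha>" for u \<beta>
  proof -
    have "\<beta> < med_fuzzy x" using \<alpha> \<open>\<beta> < \<alpha>\<close> by simp
    then obtain \<gamma> where \<gamma>: "\<beta> < \<gamma>" "\<gamma> \<in> {0<..1}" "\<forall>u\<in>{-1,1}. u * x \<le> med_supp u \<gamma>"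
      using \<open>0 < \<beta>\<close> unfolding med_fuzzy_def less_cSup_iff[OF insert_not_empty med_fuzzy_grades_bdd]
      by auto
    then show ?thesis
      using med_supp_antimono[of u \<beta> \<gamma>] that by fastforce
  qed
  then show "\<forall>u\<in>{-1,1}. u * x \<le> med_supp u \<alpha>"
    using med_supp_left_limit assms by blast
qed

lemma level_med_fuzzy_pos:
  assumes "0 < \<alpha>" "\<alpha> \<le> 1"
  shows "level med_fuzzy \<alpha> = {- med_supp (-1) \<alpha> .. med_supp 1 \<alpha>}"
proof (intro set_eqI)
  fix x
  have "x \<in> level med_fuzzy \<alpha> \<longleftrightarrow> \<alpha> \<le> med_fuzzy x" using assms by (simp add: level_def)
  also have "\<dots> \<longleftrightarrow> - med_supp (-1) \<alpha> \<le> x \<and> x \<le> med_supp 1 \<alpha>"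
    using le_med_fuzzy_iff[OF assms, of x] by auto
  finally show "x \<in> level med_fuzzy \<alpha> \<longleftrightarrow> x \<in> {- med_supp (-1) \<alpha> .. med_supp 1 \<alpha>}" by simp
qed

lemma pos_med_fuzzy_iff:
  "0 < med_fuzzy x \<longleftrightarrow> (\<exists>\<alpha>\<in>{0<..1}. \<forall>u\<in>{-1,1}. u * x \<le> med_supp u \<alpha>)"
proof
  assume "0 < med_fuzzy x"
  then show "\<exists>\<alpha>\<in>{0<..1}. \<forall>u\<in>{-1,1}. u * x \<le> med_supp u \<alpha>"
    using le_med_fuzzy_iff[of "med_fuzzy x" x] med_fuzzy_le_1[of x] by auto
next
  assume "\<exists>\<alpha>\<in>{0<..1}. \<forall>u\<in>{-1,1}. u * x \<le> med_supp u \<alpha>"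
  then obtain \<alpha> where "\<alpha> \<in> {0<..1}" "\<forall>u\<in>{-1,1}. u * x \<le> med_supp u \<alpha>" by blast
  then show "0 < med_fuzzy x" using le_med_fuzzy_iff[of \<alpha> x] by auto
qed

lemma level_med_fuzzy_zero: "level med_fuzzy 0 = {- med_supp (-1) 0 .. med_supp 1 0}"
proof -
  define U where "U = {x. 0 < med_fuzzy x}"
  have U_sub: "U \<subseteq> {- med_supp (-1) 0 .. med_supp 1 0}"
  proof
    fix x assume "x \<in> U"
    then obtain \<alpha> where "\<alpha> \<in> {0<..1}" "\<forall>u\<in>{-1,1}. u * x \<le> med_supp u \<alpha>"
      unfolding U_def pos_med_fuzzy_iff by blast
    moreover have "med_supp (-1) \<alpha> \<le> med_supp (-1) 0" "med_supp 1 \<alpha> \<le> med_supp 1 0"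
      using med_supp_antimono[of _ 0 \<alpha>] calculation(1) by auto
    ultimately show "x \<in> {- med_supp (-1) 0 .. med_supp 1 0}" by auto
  qed
  have interval_sub: "{- med_supp (-1) 0 <..< med_supp 1 0} \<subseteq> U"
  proof
    fix x assume x: "x \<in> {- med_supp (-1) 0 <..< med_supp 1 0}"
    have near_zero: "\<exists>\<alpha>\<in>{0<..1}. \<forall>\<beta>\<in>{0<..\<alpha>}. u * x \<le> med_supp u \<beta>" if u: "u \<in> {-1,1}" for u
    proof -
      have "u * x < med_supp u 0" using x u by auto
      then obtain \<alpha> where \<alpha>: "\<alpha> \<in> {0<..1}" "u * x < med_supp u \<alpha>"
        using med_supp_right_limit_zero[OF u, of "u * x"] by (meson greaterThanAtMost_iff not_le)
      have "u * x \<le> med_supp u \<beta>" if "\<beta> \<in> {0<..\<alpha>}" for \<beta>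
        using med_supp_antimono[OF u, of \<beta> \<alpha>] \<alpha> that by auto
      then show ?thesis using \<alpha>(1) by blast
    qed
    obtain \<alpha>1 where "\<alpha>1 \<in> {0<..1}" "\<forall>\<beta>\<in>{0<..\<alpha>1}. - x \<le> med_supp (-1) \<beta>"
      using near_zero[of "-1"] by auto
    moreover obtain \<alpha>2 where "\<alpha>2 \<in> {0<..1}" "\<forall>\<beta>\<in>{0<..\<alpha>2}. x \<le> med_supp 1 \<beta>"
      using near_zero[of 1] by auto
    ultimately have "min \<alpha>1 \<alpha>2 \<in> {0<..1}" "\<forall>u\<in>{-1,1}. u * x \<le> med_supp u (min \<alpha>1 \<alpha>2)"
      by auto
    then show "x \<in> U" unfolding U_def pos_med_fuzzy_iff by blast
  qed
  have "med_supp 1 1 \<in> U"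
    unfolding U_def pos_med_fuzzy_iff using med_supp_lower_le_upper[of 1] by (intro CollectI bexI[of _ 1]) auto
  have "{- med_supp (-1) 0 .. med_supp 1 0} \<subseteq> closure U"
  proof (cases "- med_supp (-1) 0 < med_supp 1 0")
    case True
    then show ?thesis using closure_mono[OF interval_sub] by simp
  next
    case False
    then have "- med_supp (-1) 0 = med_supp 1 0" using med_supp_lower_le_upper[of 0] by simp
    then show ?thesis using U_sub \<open>med_supp 1 1 \<in> U\<close> closure_subset by fastforce
  qed
  moreover have "closure U \<subseteq> {- med_supp (-1) 0 .. med_supp 1 0}"
    using U_sub by (simp add: closure_minimal)
  ultimately show ?thesis by (simp add: level_def U_def)
qed

lemma level_med_fuzzy:
  "\<alpha> \<in> {0..1} \<Longrightarrow> level med_fuzzy \<alpha> = {- med_supp (-1) \<alpha> .. med_supp 1 \<alpha>}"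
  using level_med_fuzzy_pos level_med_fuzzy_zero by (cases "\<alpha> = 0") auto

lemma med_fuzzy_in_Fc: "med_fuzzy \<in> Fc"
  unfolding Fc_def is_cinterval_def
  using med_fuzzy_nonneg med_fuzzy_le_1 level_med_fuzzy med_supp_lower_le_upper by blast

lemma supp_fun_med_fuzzy:
  "u \<in> {-1,1} \<Longrightarrow> \<alpha> \<in> {0..1} \<Longrightarrow> supp_fun med_fuzzy u \<alpha> = med_supp u \<alpha>"
  using supp_fun_atLeastAtMost[OF med_supp_lower_le_upper level_med_fuzzy] by auto

lemma eq_med_fuzzyI:
  assumes "A \<in> Fc" and "\<And>u \<alpha>. u \<in> {-1,1} \<Longrightarrow> \<alpha> \<in> {0..1} \<Longrightarrow> supp_fun A u \<alpha> = med_supp u \<alpha>"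
  shows "A = med_fuzzy"
  using assms supp_fun_med_fuzzy by (intro Fc_eqI_supp_fun[OF _ med_fuzzy_in_Fc]) simp_all

lemma med_Si_eq: "med_Si M X = med_fuzzy"
  unfolding med_Si_def
proof (rule the_equality)
  show "med_fuzzy \<in> Fc \<and> (\<forall>u\<in>{-1,1}. \<forall>\<alpha>\<in>{0..1}. supp_fun med_fuzzy u \<alpha> = med_supp u \<alpha>)"
    using med_fuzzy_in_Fc supp_fun_med_fuzzy by blast
qed (use eq_med_fuzzyI in blast)

lemma Med_s_eq: "Med_s M X = {med_fuzzy}"
proof -
  have "A \<in> Med_s M X \<longleftrightarrow> A \<in> Fc \<and> (\<forall>u\<in>{-1,1}. \<forall>\<alpha>\<in>{0..1}. supp_fun A u \<alpha> = med_supp u \<alpha>)"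
    for A unfolding Med_s_def using Med_sX by simp
  then show ?thesis using med_fuzzy_in_Fc supp_fun_med_fuzzy eq_med_fuzzyI by blast
qed

lemma MAD_sX_nonneg: "\<alpha> \<in> {0..1} \<Longrightarrow> 0 \<le> MAD M (sX X u \<alpha>)"
  by (rule MAD_nonneg[OF sX_measurable])

lemma Outl_nonneg: "0 \<le> Outl M A X"
  unfolding Outl_def
  by (rule SUP_upper2[of "(1, 0)"]) (auto intro!: ratio_ereal_nonneg MAD_sX_nonneg)

lemma Outl_eq_0_iff:
  "Outl M A X = 0 \<longleftrightarrow> (\<forall>u\<in>{-1,1}. \<forall>\<alpha>\<in>{0..1}. supp_fun A u \<alpha> = med_supp u \<alpha>)"
proof
  assume Outl: "Outl M A X = 0"
  show "\<forall>u\<in>{-1,1}. \<forall>\<alpha>\<in>{0..1}. supp_fun A u \<alpha> = med_supp u \<alpha>"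
  proof (intro ballI)
    fix u \<alpha> :: real assume "u \<in> {-1,1}" "\<alpha> \<in> {0..1}"
    then have "ratio_ereal \<bar>supp_fun A u \<alpha> - med_supp u \<alpha>\<bar> (MAD M (sX X u \<alpha>)) \<le> 0"
      unfolding Outl[symmetric] Outl_def by (intro SUP_upper2[of "(u, \<alpha>)"]) auto
    then show "supp_fun A u \<alpha> = med_supp u \<alpha>"
      using ratio_ereal_le_0_iff MAD_sX_nonneg \<open>\<alpha> \<in> {0..1}\<close> by fastforce
  qed
next
  assume "\<forall>u\<in>{-1,1}. \<forall>\<alpha>\<in>{0..1}. supp_fun A u \<alpha> = med_supp u \<alpha>"
  then have "Outl M A X \<le> 0" unfolding Outl_def by (intro SUP_least) (auto simp: ratio_ereal_def)
  then show "Outl M A X = 0" using Outl_nonneg by (rule order.antisym)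
qed

lemma Med_DFP_eq: "Med_DFP M X = {med_fuzzy}"
proof -
  have D_FP_le_1: "D_FP M A X \<le> 1" for A
    unfolding D_FP_def using Outl_nonneg by (rule ereal_inverse_one_plus_le_1)
  have "Outl M med_fuzzy X = 0" using Outl_eq_0_iff supp_fun_med_fuzzy by blast
  then have D_FP_med_fuzzy: "D_FP M med_fuzzy X = 1" by (simp add: D_FP_def)
  have "A = med_fuzzy" if "A \<in> Med_DFP M X" for A
  proof -
    have "A \<in> Fc" "1 \<le> D_FP M A X"
      using that med_fuzzy_in_Fc D_FP_med_fuzzy by (auto simp: Med_DFP_def)
    then have "Outl M A X = 0"
      using one_le_ereal_inverse_one_plus_iff[OF Outl_nonneg] by (simp add: D_FP_def)
    then show ?thesis using \<open>A \<in> Fc\<close> Outl_eq_0_iff eq_med_fuzzyI by blast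
  qed
  moreover have "med_fuzzy \<in> Med_DFP M X"
    using med_fuzzy_in_Fc D_FP_le_1 D_FP_med_fuzzy by (simp add: Med_DFP_def)
  ultimately show ?thesis by blast
qed

lemma med_supp_ge_if_selection:
  assumes Y: "Y \<in> borel_measurable M" "x \<in> Med M Y" and "0 < \<alpha>" "\<alpha> \<le> 1"
    and sel: "\<And>w. w \<in> space M \<Longrightarrow> Y w \<in> level (X w) \<alpha>" and u: "u \<in> {-1,1}"
  shows "u * x \<le> med_supp u \<alpha>"
proof -
  have \<alpha>: "\<alpha> \<in> {0..1}" using assms by simp
  have "1/2 \<le> prob {w\<in>space M. u * x \<le> u * Y w}"
    using Y(2) u by (auto simp: Med_def)
  also have "\<dots> \<le> prob {w\<in>space M. u * x \<le> sX X u \<alpha> w}"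
  proof (intro finite_measure_mono subsetI)
    fix w assume "w \<in> {w\<in>space M. u * x \<le> u * Y w}"
    then show "w \<in> {w\<in>space M. u * x \<le> sX X u \<alpha> w}"
      using sel supp_fun_ge_iff[OF X_in_Fc \<alpha>] by (auto simp: sX_def)
  qed (use sX_measurable[OF \<alpha>] in measurable)
  finally show ?thesis by (rule Med_singleton_ge[OF sX_measurable[OF \<alpha>] Med_sX[OF u \<alpha>]])
qed

lemma selection_if_med_supp_ge:
  assumes "0 < \<alpha>" "\<alpha> \<le> 1" and x: "\<forall>u\<in>{-1,1}. u * x \<le> med_supp u \<alpha>"
  obtains Y where "Y \<in> borel_measurable M" "x \<in> Med M Y" "\<And>w. w \<in> space M \<Longrightarrow> Y w \<in> level (X w) \<alpha>"
proof
  have \<alpha>: "\<alpha> \<in> {0..1}" using assms by simp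
  define Y where "Y w = max (- sX X (-1) \<alpha> w) (min x (sX X 1 \<alpha> w))" for w
  show Y_meas: "Y \<in> borel_measurable M"
    unfolding Y_def using sX_measurable[OF \<alpha>] by measurable
  show "Y w \<in> level (X w) \<alpha>" if "w \<in> space M" for w
    using level_X_eq[OF that \<alpha>] by (auto simp: Y_def)
  have "prob {w\<in>space M. med_supp (-1) \<alpha> \<le> sX X (-1) \<alpha> w} \<le> prob {w\<in>space M. Y w \<le> x}"
    using x by (intro finite_measure_mono) (auto simp: Y_def, use sX_measurable[OF \<alpha>] in measurable)
  moreover have "prob {w\<in>space M. med_supp 1 \<alpha> \<le> sX X 1 \<alpha> w} \<le> prob {w\<in>space M. x \<le> Y w}"
    using x by (intro finite_measure_mono) (auto simp: Y_def, use sX_measurable[OF \<alpha>] in measurable)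
  ultimately show "x \<in> Med M Y" using med_supp_half(2)[OF _ \<alpha>] by (force simp: Med_def)
qed

definition sel_grade :: "('w \<Rightarrow> real) \<Rightarrow> real" where
  "sel_grade Y = Inf ((\<lambda>w. X w (Y w)) ` space M)"

lemma sel_grade_bounds:
  shows "0 \<le> sel_grade Y" "sel_grade Y \<le> 1" "\<And>w. w \<in> space M \<Longrightarrow> sel_grade Y \<le> X w (Y w)"
proof -
  have X01: "0 \<le> X w v \<and> X w v \<le> 1" if "w \<in> space M" for w v
    using X_in_Fc[OF that] by (simp add: Fc_def)
  show "0 \<le> sel_grade Y" unfolding sel_grade_def using not_empty X01 by (intro cInf_greatest) auto
  show lower: "sel_grade Y \<le> X w (Y w)" if "w \<in> space M" for w
    unfolding sel_grade_def using that X01 by (intro cInf_lower) (auto intro!: bdd_belowI[of _ 0])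
  obtain w where "w \<in> space M" using not_empty by blast
  then show "sel_grade Y \<le> 1" using lower X01 by (meson order.trans)
qed

lemma sel_grade_le_med_fuzzy:
  assumes Y: "Y \<in> borel_measurable M" "x \<in> Med M Y"
  shows "sel_grade Y \<le> med_fuzzy x"
proof (cases "sel_grade Y \<le> 0")
  case False
  then have "0 < sel_grade Y" "sel_grade Y \<le> 1" using sel_grade_bounds(2) by auto
  moreover have "Y w \<in> level (X w) (sel_grade Y)" if "w \<in> space M" for w
    using sel_grade_bounds(3)[OF that] \<open>0 < sel_grade Y\<close> by (simp add: level_def)
  ultimately have "\<forall>u\<in>{-1,1}. u * x \<le> med_supp u (sel_grade Y)"
    using med_supp_ge_if_selection[OF Y] by blast
  then show ?thesis using le_med_fuzzy_iff \<open>0 < sel_grade Y\<close> \<open>sel_grade Y \<le> 1\<close> by blast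
qed (use med_fuzzy_nonneg[of x] in simp)

lemma ex_selection_med_fuzzy_le_sel_grade:
  obtains Y where "Y \<in> borel_measurable M" "x \<in> Med M Y" "med_fuzzy x \<le> sel_grade Y"
proof (cases "med_fuzzy x = 0")
  case True
  have "x \<in> Med M (\<lambda>_. x)" by (simp add: Med_def prob_space)
  then show ?thesis using that[of "\<lambda>_. x"] True sel_grade_bounds(1) by simp
next
  case False
  then have "0 < med_fuzzy x" "med_fuzzy x \<le> 1" using med_fuzzy_nonneg[of x] med_fuzzy_le_1[of x] by auto
  moreover have "\<forall>u\<in>{-1,1}. u * x \<le> med_supp u (med_fuzzy x)"
    using le_med_fuzzy_iff calculation by blast
  ultimately obtain Y where Y: "Y \<in> borel_measurable M" "x \<in> Med M Y"
    and sel: "\<And>w. w \<in> space M \<Longrightarrow> Y w \<in> level (X w) (med_fuzzy x)"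
    using selection_if_med_supp_ge by blast
  have "med_fuzzy x \<le> sel_grade Y"
    unfolding sel_grade_def using not_empty sel \<open>0 < med_fuzzy x\<close>
    by (intro cInf_greatest) (auto simp: level_def)
  with Y show ?thesis by (rule that)
qed

lemma med_Gr_eq: "med_Gr M X = med_fuzzy"
proof
  fix x
  define grades where "grades = {sel_grade Y | Y. Y \<in> borel_measurable M \<and> x \<in> Med M Y}"
  obtain Y where Y: "Y \<in> borel_measurable M" "x \<in> Med M Y" "med_fuzzy x \<le> sel_grade Y"
    by (rule ex_selection_med_fuzzy_le_sel_grade)
  have "Sup grades \<le> med_fuzzy x"
    unfolding grades_def using Y sel_grade_le_med_fuzzy by (intro cSup_least) auto
  moreover have "med_fuzzy x \<le> Sup grades"
    unfolding grades_def using Y sel_grade_bounds(2)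
    by (intro cSup_upper2[of "sel_grade Y"] bdd_aboveI[of _ 1]) auto
  ultimately show "med_Gr M X x = med_fuzzy x" by (simp add: med_Gr_def grades_def sel_grade_def)
qed

end

theorem theorem4p7:
  fixes M :: "'w measure" and X :: "'w \<Rightarrow> real \<Rightarrow> real"
  assumes "prob_space M"
    and "fuzzy_random_variable M X"
    and "non_degenerate M X"
    and "\<forall>u\<in>{-1,1::real}. \<forall>\<alpha>\<in>{0..1::real}. \<exists>m. Med M (sX X u \<alpha>) = {m}"
  shows "Med_s M X = Med_DFP M X \<and> Med_DFP M X = {med_Si M X} \<and> {med_Si M X} = {med_Gr M X}"
proof -
  interpret fuzzy_rv_unique_Med M X
    using assms(1,2,4) by (simp add: fuzzy_rv_unique_Med_def fuzzy_rv_unique_Med_axioms_def)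
  show ?thesis using Med_s_eq Med_DFP_eq med_Si_eq med_Gr_eq by simp
qed

end
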